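(* Let $\mathcal{X}$ have exactly two elements, so that $\mathscr{V}=\mathbb{R}^2$ with the componentwise order. For every $A\in\mathscr{Q}$ there is an option set $B\subseteq A$ with at most two elements such that $\{A\}$ is equivalent to $\{B\}$. Moreover, such a $B$ can be obtained from $A$ by finitely many successive removal steps, each of which replaces the current set $A'$ by $A'\setminus\{u\}$ for some $u\in A'$ for which there exist $v\in A'$ with $v\neq u$ and a real $\mu\ge0$ such that $u\le\mu v$.
   Context: Let $\mathscr{V}$ be a real vector space of functions $\mathcal X\to\mathbb{R}$ with pointwise operations; for $u,v\in\mathscr{V}$, $u\le v$ iff $u(x)\le v(x)$ for all $x$, and $u<v$ iff $u\le v$ and $u\neq v$. Let $\mathscr{V}_{>0}=\{u\in\mathscr{V}:0<u\}$ and $\mathscr{V}^s_{>0}=\{\{u\}:u\in\mathscr{V}_{>0}\}$. Let $\mathscr{Q}$ be the set of all finite subsets of $\mathscr{V}$ (including $\emptyset$). For a positive integer $n$, $\mathbb{R}^{n,+}=\{\boldsymbol\lambda\in\mathbb{R}^n:\lambda_j\ge0\ \forall j,\ \sum_j\lambda_j>0\}$, and for $\boldsymbol\lambda\in\mathbb{R}^n$, $\mathbf u=(u_1,\dots,u_n)\in\mathscr{V}^n$, $\boldsymbol\lambda\mathbf u=\sum_{j=1}^n\lambda_ju_j$. A set of desirable option sets is any $K\subseteq\mathscr{Q}$. It is coherent if for all $A,B\in K$: (K0) $A\setminus\{0\}\in K$; (K1) $\{0\}\notin K$; (K2) $\mathscr{V}^s_{>0}\subseteq K$; (K3) $\{\boldsymbol\lambda(\mathbf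 u)\mathbf u:\mathbf u\in A\times B\}\in K$ for every map $\boldsymbol\lambda:A\times B\to\mathbb{R}^{2,+}$; (K4) $A\cup Q\in K$ for all $Q\in\mathscr{Q}$. $\bar{\mathbf K}$ denotes the set of coherent sets of desirable option sets. An assessment is any subset $\mathcal{A}\subseteq\mathscr{Q}$; $\bar{\mathbf K}(\mathcal A)=\{K\in\bar{\mathbf K}:\mathcal A\subseteq K\}$. Two assessments $\mathcal A_1,\mathcal A_2$ are called equivalent if $\bar{\mathbf K}(\mathcal A_1)=\bar{\mathbf K}(\mathcal A_2)$. *)

theory Defs
  imports Complex_Main
begin

text \<open>Order on functions is the library's pointwise
  order, so u < v iff u \<le> v and u \<noteq> v.\<close>

definition pos_opts :: "('x \<Rightarrow> real) set \<Rightarrow> ('x \<Rightarrow> real) set" where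
  "pos_opts V = {u \<in> V. (\<lambda>_. 0) < u}"

definition opt_sets :: "('x \<Rightarrow> real) set \<Rightarrow> ('x \<Rightarrow> real) set set" where
  "opt_sets V = {A. finite A \<and> A \<subseteq> V}"

definition lam_pos2 :: "real \<times> real \<Rightarrow> bool" where
  "lam_pos2 l \<longleftrightarrow> fst l \<ge> 0 \<and> snd l \<ge> 0 \<and> fst l + snd l > 0"

definition coherent :: "('x \<Rightarrow> real) set \<Rightarrow> ('x \<Rightarrow> real) set set \<Rightarrow> bool" where
  "coherent V K \<longleftrightarrow> K \<subseteq> opt_sets V \<and>
     {\<lambda>_. 0} \<notin> K \<and>
     {{u} | u. u \<in> pos_opts V} \<subseteq> K \<and>
     (\<forall>A\<in>K. A - {\<lambda>_. 0} \<in> K) \<and>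
     (\<forall>A\<in>K. \<forall>B\<in>K. \<forall>l :: ('x \<Rightarrow> real) \<times> ('x \<Rightarrow> real) \<Rightarrow> real \<times> real.
        (\<forall>p\<in>A \<times> B. lam_pos2 (l p)) \<longrightarrow>
        (\<lambda>p. \<lambda>x. fst (l p) * fst p x + snd (l p) * snd p x) ` (A \<times> B) \<in> K) \<and>
     (\<forall>A\<in>K. \<forall>Q\<in>opt_sets V. A \<union> Q \<in> K)"

definition coh_ext :: "('x \<Rightarrow> real) set \<Rightarrow> ('x \<Rightarrow> real) set set \<Rightarrow> ('x \<Rightarrow> real) set set set" where
  "coh_ext V \<A> = {K. coherent V K \<and> \<A> \<subseteq> K}"

definition equiv_assess :: "('x \<Rightarrow> real) set \<Rightarrow> ('x \<Rightarrow> real) set set \<Rightarrow> ('x \<Rightarrow> real) set set \<Rightarrow> bool" where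
  "equiv_assess V \<A>1 \<A>2 \<longleftrightarrow> coh_ext V \<A>1 = coh_ext V \<A>2"

definition removal_step :: "('x \<Rightarrow> real) set \<Rightarrow> ('x \<Rightarrow> real) set \<Rightarrow> bool" where
  "removal_step A A' \<longleftrightarrow> (\<exists>u\<in>A. A' = A - {u} \<and>
     (\<exists>v\<in>A. v \<noteq> u \<and> (\<exists>\<mu>::real. \<mu> \<ge> 0 \<and> u \<le> (\<lambda>x. \<mu> * v x))))"

end

theory Submission
  imports Defs
begin

text \<open>Removing an option u that is dominated by a nonnegative multiple \<open>\<mu> v\<close> of another
  option v of A never changes the coherent sets containing the option set: by (K3) u can be
  replaced by a positive multiple of \<open>\<mu> v\<close> (adding the positive gap \<open>\<mu> v - u\<close> via (K2) if needed),
  which is either v itself or 0, and (K0), (K4) then remove the leftovers. In the plane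
  any three distinct options contain such a dominated pair: an option \<open>\<le> 0\<close> is dominated by
  \<open>0 \<cdot> v\<close>, and otherwise two of them are positive in a common coordinate, where they can be
  compared by their slopes. Removing options as long as there are more than two gives B.\<close>

definition dominated_by_multiple :: "('x \<Rightarrow> real) \<Rightarrow> ('x \<Rightarrow> real) \<Rightarrow> bool" where
  "dominated_by_multiple u v \<longleftrightarrow> (\<exists>\<mu>\<ge>0. u \<le> (\<lambda>x. \<mu> * v x))"

lemma removal_step_iff:
  "removal_step A A' \<longleftrightarrow>
     (\<exists>u\<in>A. A' = A - {u} \<and> (\<exists>v\<in>A. v \<noteq> u \<and> dominated_by_multiple u v))"
  by (auto simp: removal_step_def dominated_by_multiple_def)

lemma coherent_mem_if_subset_insert_zero:
  assumes K: "coherent V K" and "R \<in> K" "R \<subseteq> insert (\<lambda>_. 0) A" "A \<in> opt_sets V"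
  shows "A \<in> K"
proof -
  have "R - {\<lambda>_. 0} \<in> K" using K \<open>R \<in> K\<close> by (simp add: coherent_def)
  then have "(R - {\<lambda>_. 0}) \<union> A \<in> K" using K \<open>A \<in> opt_sets V\<close> unfolding coherent_def by blast
  moreover have "(R - {\<lambda>_. 0}) \<union> A = A" using \<open>R \<subseteq> insert (\<lambda>_. 0) A\<close> by blast
  ultimately show ?thesis by simp
qed

lemma coherent_replace_mem:
  assumes K: "coherent V K" and A: "A \<in> K" and B: "B \<in> K" and "c > 0" "t \<ge> 0"
    and A': "A - {u} \<subseteq> A'" "A' \<in> opt_sets V"
    and replaced: "\<And>b. b \<in> B \<Longrightarrow> (\<lambda>x. c * (u x + t * b x)) \<in> insert (\<lambda>_. 0) A'"
  shows "A' \<in> K"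
proof -
  define l where "l = (\<lambda>p::('a \<Rightarrow> real) \<times> ('a \<Rightarrow> real). if fst p = u then (c, c * t) else (1, 0))"
  let ?R = "(\<lambda>p. \<lambda>x. fst (l p) * fst p x + snd (l p) * snd p x) ` (A \<times> B)"
  have "\<forall>p\<in>A \<times> B. lam_pos2 (l p)"
    using \<open>c > 0\<close> \<open>t \<ge> 0\<close> by (auto simp: l_def lam_pos2_def intro!: add_pos_nonneg)
  then have "?R \<in> K" using K A B unfolding coherent_def by blast
  moreover have "?R \<subseteq> insert (\<lambda>_. 0) A'"
  proof
    fix w assume "w \<in> ?R"
    then obtain a b where ab: "a \<in> A" "b \<in> B"
      and w: "w = (\<lambda>x. fst (l (a, b)) * a x + snd (l (a, b)) * b x)" by auto
    show "w \<in> insert (\<lambda>_. 0) A'"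
    proof (cases "a = u")
      case True
      then have "w = (\<lambda>x. c * (u x + t * b x))" using w by (simp add: l_def algebra_simps)
      then show ?thesis using replaced ab by simp
    next
      case False
      then show ?thesis using w ab A' by (auto simp: l_def)
    qed
  qed
  ultimately show ?thesis using coherent_mem_if_subset_insert_zero K A' by blast
qed

lemma coherent_remove_dominated:
  assumes K: "coherent UNIV K" and A: "A \<in> K" and "v \<in> A" "v \<noteq> u"
    and "dominated_by_multiple u v"
  shows "A - {u} \<in> K"
proof -
  obtain \<mu> where "\<mu> \<ge> 0" and u_le: "u \<le> (\<lambda>x. \<mu> * v x)"
    using \<open>dominated_by_multiple u v\<close> by (auto simp: dominated_by_multiple_def)
  define c where "c = (if \<mu> > 0 then 1 / \<mu> else 1)"
  have "c > 0" using \<open>\<mu> \<ge> 0\<close> by (simp add: c_def)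
  have scaled: "(\<lambda>x. c * (\<mu> * v x)) \<in> insert (\<lambda>_. 0) (A - {u})"
    using \<open>\<mu> \<ge> 0\<close> \<open>v \<in> A\<close> \<open>v \<noteq> u\<close> by (auto simp: c_def)
  have "A - {u} \<in> opt_sets UNIV"
    using K A by (auto simp: coherent_def opt_sets_def)
  show ?thesis
  proof (cases "u = (\<lambda>x. \<mu> * v x)")
    case True
    \<comment> \<open>there is no gap to add, and (K2) does not provide \<open>{0}\<close>: switch the second argument off\<close>
    show ?thesis
      by (rule coherent_replace_mem[OF K A A \<open>c > 0\<close>, of 0 u])
        (use True scaled \<open>A - {u} \<in> opt_sets UNIV\<close> in auto)
  next
    case False
    define gap where "gap = (\<lambda>x. \<mu> * v x - u x)"
    have "(\<lambda>_. 0) \<le> gap" using u_le by (simp add: gap_def le_fun_def)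
    moreover have "(\<lambda>_. 0) \<noteq> gap" using False by (auto simp: gap_def fun_eq_iff) metis
    ultimately have "(\<lambda>_. 0) < gap" by (simp add: less_le)
    then have "{gap} \<in> K" using K by (auto simp: coherent_def pos_opts_def)
    show ?thesis
      by (rule coherent_replace_mem[OF K A \<open>{gap} \<in> K\<close> \<open>c > 0\<close>, of 1 u])
        (use scaled \<open>A - {u} \<in> opt_sets UNIV\<close> in \<open>auto simp: gap_def\<close>)
  qed
qed

lemma equiv_assess_removal_step:
  assumes "finite A" "removal_step A A'"
  shows "equiv_assess UNIV {A} {A'}"
proof -
  obtain u v where u: "u \<in> A" "A' = A - {u}" and v: "v \<in> A" "v \<noteq> u"
    and "dominated_by_multiple u v"
    using assms(2) by (auto simp: removal_step_iff)
  have "A \<in> K \<longleftrightarrow> A - {u} \<in> K" if K: "coherent UNIV K" for K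
  proof
    assume "A - {u} \<in> K"
    moreover have "\<forall>A\<in>K. \<forall>Q\<in>opt_sets UNIV. A \<union> Q \<in> K" using K by (simp add: coherent_def)
    moreover have "{u} \<in> opt_sets UNIV" by (simp add: opt_sets_def)
    ultimately have "(A - {u}) \<union> {u} \<in> K" by blast
    moreover have "(A - {u}) \<union> {u} = A" using u by blast
    ultimately show "A \<in> K" by simp
  qed (use coherent_remove_dominated[OF K _ v \<open>dominated_by_multiple u v\<close>] in blast)
  then show ?thesis using u by (auto simp: equiv_assess_def coh_ext_def)
qed

lemma removal_steps_subset: "removal_step\<^sup>*\<^sup>* A B \<Longrightarrow> B \<subseteq> A"
  by (induction rule: rtranclp_induct) (auto simp: removal_step_def)

lemma equiv_assess_removal_steps:
  assumes "removal_step\<^sup>*\<^sup>* A B" "finite A"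
  shows "equiv_assess UNIV {A} {B}"
  using assms
proof (induction rule: rtranclp_induct)
  case (step B C)
  have "finite B" using removal_steps_subset[OF step.hyps(1)] \<open>finite A\<close> finite_subset by blast
  then show ?case
    using step equiv_assess_removal_step by (simp add: equiv_assess_def)
qed (simp add: equiv_assess_def)

lemma dominated_by_multiple_if_nonpos: "u \<le> (\<lambda>_. 0) \<Longrightarrow> dominated_by_multiple u v"
  unfolding dominated_by_multiple_def by (rule exI[of _ 0]) (simp add: le_fun_def)

lemma dominated_by_multiple_if_common_pos:
  fixes u v :: "'x \<Rightarrow> real"
  assumes U: "UNIV = {c, d}" and "u c > 0" "v c > 0"
  shows "dominated_by_multiple u v \<or> dominated_by_multiple v u"
proof -
  have slope: "dominated_by_multiple u v"
    if "u c > 0" "v c > 0" "u d * v c \<le> u c * v d" for u v :: "'x \<Rightarrow> real"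
  proof -
    have "u x \<le> u c / v c * v x" for x
    proof -
      have "x = c \<or> x = d" using U by blast
      then show ?thesis
        using that by (auto simp: pos_le_divide_eq mult.commute)
    qed
    then have "u \<le> (\<lambda>x. u c / v c * v x)" by (simp add: le_fun_def)
    then show ?thesis using that unfolding dominated_by_multiple_def
      by (intro exI[of _ "u c / v c"]) simp
  qed
  have "u d * v c \<le> u c * v d \<or> v d * u c \<le> v c * u d" by (metis linear mult.commute)
  then show ?thesis using slope assms(2,3) by blast
qed

lemma dominated_pair_among_three:
  fixes P :: "('x \<Rightarrow> real) set" and a b :: 'x
  assumes U: "UNIV = {a, b}" and "card P = 3"
  shows "\<exists>u\<in>P. \<exists>v\<in>P. v \<noteq> u \<and> dominated_by_multiple u v"
proof (cases "\<exists>w\<in>P. w \<le> (\<lambda>_. 0)")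
  case True
  then obtain w where "w \<in> P" "w \<le> (\<lambda>_. 0)" by blast
  have "\<not> P \<subseteq> {w}" using \<open>card P = 3\<close> card_mono[of "{w}" P] by auto
  then obtain v where "v \<in> P" "v \<noteq> w" by blast
  then show ?thesis
    using \<open>w \<in> P\<close> dominated_by_multiple_if_nonpos[OF \<open>w \<le> (\<lambda>_. 0)\<close>, of v] by metis
next
  case False
  let ?pos = "\<lambda>x. {w \<in> P. w x > 0}"
  have "P \<subseteq> ?pos a \<union> ?pos b"
  proof
    fix w assume "w \<in> P"
    then obtain x where "w x > 0" using False by (force simp: le_fun_def not_le)
    moreover have "x = a \<or> x = b" using U by blast
    ultimately show "w \<in> ?pos a \<union> ?pos b" using \<open>w \<in> P\<close> by auto
  qed
  moreover have "finite P" using \<open>card P = 3\<close> by (simp add: card_ge_0_finite)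
  ultimately have "card P \<le> card (?pos a \<union> ?pos b)" by (simp add: card_mono)
  also have "\<dots> \<le> card (?pos a) + card (?pos b)" by (rule card_Un_le)
  finally have "card P \<le> card (?pos a) + card (?pos b)" .
  then have "2 \<le> card (?pos a) \<or> 2 \<le> card (?pos b)" using \<open>card P = 3\<close> by linarith
  then obtain c d where U': "UNIV = {c, d}" and "2 \<le> card (?pos c)"
  proof (elim disjE)
    assume "2 \<le> card (?pos b)"
    then show thesis using U by (intro that[of b a]) auto
  qed (use U in blast)
  obtain Q where "Q \<subseteq> ?pos c" "card Q = 2" "finite Q"
    using \<open>2 \<le> card (?pos c)\<close> by (rule obtain_subset_with_card_n)
  then obtain u v where "Q = {u, v}" "u \<noteq> v" unfolding card_2_iff by blast
  then have "u \<in> P" "v \<in> P" "u c > 0" "v c > 0" using \<open>Q \<subseteq> ?pos c\<close> by auto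
  then have "dominated_by_multiple u v \<or> dominated_by_multiple v u"
    using dominated_by_multiple_if_common_pos[OF U'] by blast
  then show ?thesis using \<open>u \<in> P\<close> \<open>v \<in> P\<close> \<open>u \<noteq> v\<close> by metis
qed

lemma removal_steps_to_card_le_2:
  fixes A :: "('x \<Rightarrow> real) set" and a b :: 'x
  assumes U: "UNIV = {a, b}" and "finite A"
  shows "\<exists>B. card B \<le> 2 \<and> removal_step\<^sup>*\<^sup>* A B"
  using \<open>finite A\<close>
proof (induction "card A" arbitrary: A rule: less_induct)
  case less
  show ?case
  proof (cases "card A \<le> 2")
    case False
    then have "3 \<le> card A" by linarith
    then obtain P where "P \<subseteq> A" "card P = 3" "finite P"
      by (rule obtain_subset_with_card_n)
    then obtain u v where "u \<in> A" "v \<in> A" "v \<noteq> u" "dominated_by_multiple u v"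
      using dominated_pair_among_three[OF U \<open>card P = 3\<close>] \<open>P \<subseteq> A\<close> by blast
    then have step: "removal_step A (A - {u})" by (auto simp: removal_step_iff)
    have "card (A - {u}) < card A" using card_Diff1_less[OF less.prems \<open>u \<in> A\<close>] .
    then obtain B where "card B \<le> 2" "removal_step\<^sup>*\<^sup>* (A - {u}) B"
      using less.hyps less.prems by blast
    then show ?thesis using step by (meson converse_rtranclp_into_rtranclp)
  qed blast
qed

theorem proposition5:
  fixes A :: "('x::finite \<Rightarrow> real) set"
  assumes "card (UNIV :: 'x set) = 2"
    and "A \<in> opt_sets (UNIV :: ('x \<Rightarrow> real) set)"
  shows "\<exists>B. B \<subseteq> A \<and> card B \<le> 2 \<and> equiv_assess UNIV {A} {B} \<and> removal_step\<^sup>*\<^sup>* A B"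
proof -
  obtain a b :: 'x where U: "UNIV = {a, b}" using assms(1) by (metis card_2_iff)
  have "finite A" using assms(2) by (simp add: opt_sets_def)
  then obtain B where "card B \<le> 2" and steps: "removal_step\<^sup>*\<^sup>* A B"
    using removal_steps_to_card_le_2[OF U] by blast
  moreover have "B \<subseteq> A" using removal_steps_subset[OF steps] .
  moreover have "equiv_assess UNIV {A} {B}" using equiv_assess_removal_steps[OF steps \<open>finite A\<close>] .
  ultimately show ?thesis by blast
qed

end
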